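(* Let $X,Y$ be non-empty subsets of $\mathbb{R}^2$, let $\eta\in\mathbb{R}\setminus\{0\}$, $\xi\in\mathbb{N}^*$, $\varepsilon>0$ and $A\in\mathrm{SL}(2,\mathbb{Z})$. If $Y\subseteq B_\varepsilon(X)$, then $A\circ J_{\eta,\xi}\circ A^{-1}(Y)\subseteq B_\varepsilon(\mathrm{Str}(X,A(0,\eta)))$.
   Context: $B_\varepsilon(Z)$ is the open $\varepsilon$-neighbourhood of $Z$. $\mathrm{Str}(X,w)=X+[-w,w]$ (Minkowski sum with the segment joining $-w$ and $w$). For $\xi\in\mathbb{N}^*$, $\phi_\xi(x)=(-1)^{z+1}(4\xi x-2z-1)$ for $z\in\mathbb{Z}$, $x\in[\frac{z}{2\xi},\frac{z+1}{2\xi})$, and $J_{\eta,\xi}(x,y)=(x,y+\eta\phi_\xi(x))$. *)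

theory Defs
  imports "HOL-Analysis.Analysis"
begin

definition nbhd :: "real \<Rightarrow> (real^2) set \<Rightarrow> (real^2) set" where
  "nbhd \<epsilon> Z = {y. \<exists>x\<in>Z. dist y x < \<epsilon>}"

definition Str :: "(real^2) set \<Rightarrow> real^2 \<Rightarrow> (real^2) set" where
  "Str X w = {x + s | x s. x \<in> X \<and> s \<in> closed_segment (-w) w}"

text \<open>phi_xi(x) = (-1)^(z+1) (4 xi x - 2z - 1) where z is the unique integer with
  x in [z/(2 xi), (z+1)/(2 xi)), i.e. z = floor(2 xi x).\<close>
definition phi :: "nat \<Rightarrow> real \<Rightarrow> real" where
  "phi \<xi> x = (let z = \<lfloor>2 * real \<xi> * x\<rfloor> in
     (-1) powi (z + 1) * (4 * real \<xi> * x - 2 * of_int z - 1))"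

definition J :: "real \<Rightarrow> nat \<Rightarrow> real^2 \<Rightarrow> real^2" where
  "J \<eta> \<xi> v = vector [v$1, v$2 + \<eta> * phi \<xi> (v$1)]"

definition real_mat :: "int^2^2 \<Rightarrow> real^2^2" where
  "real_mat A = (\<chi> i j. real_of_int (A$i$j))"

end

theory Submission
  imports Defs
begin

text \<open>Conjugated by a real matrix \<open>B\<close>, the map \<open>J\<close> moves every point \<open>y\<close> by
  \<open>t *\<^sub>R B (0, \<eta>)\<close> with \<open>t = phi \<xi> (\<dots>)\<close>, and \<open>|phi| \<le> 1\<close> puts this displacement in the
  segment \<open>[-B (0, \<eta>), B (0, \<eta>)]\<close>. A point within \<open>\<epsilon>\<close> of \<open>x \<in> X\<close> therefore lands
  within \<open>\<epsilon>\<close> of \<open>x + t *\<^sub>R B (0, \<eta>) \<in> Str X (B (0, \<eta>))\<close>.\<close>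

lemma abs_phi_le_1: "\<bar>phi \<xi> x\<bar> \<le> 1"
proof -
  define z where "z = \<lfloor>2 * real \<xi> * x\<rfloor>"
  have "of_int z \<le> 2 * real \<xi> * x" "2 * real \<xi> * x < of_int z + 1"
    unfolding z_def by linarith+
  then have "\<bar>4 * real \<xi> * x - 2 * of_int z - 1\<bar> \<le> 1"
    by linarith
  moreover have "\<bar>(-1::real) powi (z + 1)\<bar> = 1"
    by (simp add: power_int_abs)
  ultimately show ?thesis
    unfolding phi_def Let_def z_def[symmetric] abs_mult by simp
qed

lemma J_eq_add_scaleR: "J \<eta> \<xi> v = v + phi \<xi> (v$1) *\<^sub>R vector [0, \<eta>]"
  unfolding J_def by (simp add: vec_eq_iff forall_2 vector_2)

lemma det_real_mat: "det (real_mat A) = real_of_int (det A)"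
  unfolding det_2 real_mat_def by simp

lemma matrix_mul_matrix_inv_right:
  fixes A :: "'a::semiring_1^'n^'m"
  assumes "invertible A"
  shows "A ** matrix_inv A = mat 1"
  using assms unfolding invertible_def matrix_inv_def by (rule someI_ex[THEN conjunct1])

lemma matrix_vector_mul_matrix_inv_cancel:
  fixes A :: "'a::comm_semiring_1^'n^'m"
  assumes "invertible A"
  shows "A *v (matrix_inv A *v y) = y"
  by (simp add: matrix_vector_mul_assoc matrix_mul_matrix_inv_right[OF assms])

lemma conjugate_J_eq:
  fixes B :: "real^2^2"
  assumes "invertible B"
  shows "B *v J \<eta> \<xi> (matrix_inv B *v y)
           = y + phi \<xi> ((matrix_inv B *v y)$1) *\<^sub>R (B *v vector [0, \<eta>])"
  by (simp add: J_eq_add_scaleR matrix_vector_right_distrib matrix_vector_mult_scaleR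
      matrix_vector_mul_matrix_inv_cancel[OF assms])

lemma scaleR_in_closed_segment_neg:
  fixes w :: "'a::real_vector"
  assumes "\<bar>t\<bar> \<le> 1"
  shows "t *\<^sub>R w \<in> closed_segment (-w) w"
proof -
  have "t *\<^sub>R w = (1 - (1 + t) / 2) *\<^sub>R (-w) + ((1 + t) / 2) *\<^sub>R w"
    by (simp add: scaleR_diff_left[symmetric] add_divide_distrib[symmetric])
  then show ?thesis
    unfolding in_segment using assms by (intro exI[of _ "(1 + t) / 2"]) auto
qed

lemma add_scaleR_in_nbhd_Str:
  assumes "y \<in> nbhd \<epsilon> X" and "\<bar>t\<bar> \<le> 1"
  shows "y + t *\<^sub>R w \<in> nbhd \<epsilon> (Str X w)"
proof -
  obtain x where "x \<in> X" and "dist y x < \<epsilon>"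
    using assms(1) unfolding nbhd_def by blast
  moreover have "x + t *\<^sub>R w \<in> Str X w"
    unfolding Str_def using \<open>x \<in> X\<close> scaleR_in_closed_segment_neg[OF assms(2)] by blast
  moreover have "dist (y + t *\<^sub>R w) (x + t *\<^sub>R w) < \<epsilon>"
    using \<open>dist y x < \<epsilon>\<close> by (simp add: dist_norm)
  ultimately show ?thesis
    unfolding nbhd_def by blast
qed

theorem mainTheorem13:
  fixes X Y :: "(real^2) set" and \<eta> \<epsilon> :: real and \<xi> :: nat and A :: "int^2^2"
  assumes "X \<noteq> {}" and "Y \<noteq> {}"
    and "\<eta> \<noteq> 0" and "\<xi> \<ge> 1" and "\<epsilon> > 0"
    and "det A = 1"
    and "Y \<subseteq> nbhd \<epsilon> X"
  shows "(\<lambda>y. real_mat A *v J \<eta> \<xi> (matrix_inv (real_mat A) *v y)) ` Y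
           \<subseteq> nbhd \<epsilon> (Str X (real_mat A *v vector [0, \<eta>]))"
proof clarify
  have "invertible (real_mat A)"
    using \<open>det A = 1\<close> by (simp add: invertible_det_nz det_real_mat)
  fix y assume "y \<in> Y"
  show "real_mat A *v J \<eta> \<xi> (matrix_inv (real_mat A) *v y)
          \<in> nbhd \<epsilon> (Str X (real_mat A *v vector [0, \<eta>]))"
    unfolding conjugate_J_eq[OF \<open>invertible (real_mat A)\<close>]
    using \<open>y \<in> Y\<close> \<open>Y \<subseteq> nbhd \<epsilon> X\<close> by (intro add_scaleR_in_nbhd_Str abs_phi_le_1) auto
qed

end
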